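(* (a) Let $X\subseteq\mathbb{R}$ be r.e. open. Every continuous and effectively open $f:X\to\mathbb{R}$ is computable. (b) Let $X\subseteq\mathbb{R}^n$ be r.e. open and $f=(f_1,\dots,f_m):X\to\mathbb{R}^m$ continuous and effectively open but not computable. Then some component $f_i:X\to\mathbb{R}$ is continuous and effectively open but not computable.
   Context: Type-2 computability (Weihrauch) with Cauchy representation for real vectors; $\theta^d_<$ represents open subsets of $\mathbb{R}^d$ by lists of rational centers and radii of open balls with union the set; $X$ r.e. open means it has a computable $\theta^n_<$-name. An open $f$ on $X$ is effectively open if $U\mapsto f[U]$ on open $U\subseteq X$ is $(\theta^n_<\to\theta^m_<)$-computable. *)

theory Defs
  imports Complex_Main "HOL-Library.Nat_Bijection"
begin

datatype recf = Zf | Sf | Pf nat | Cnf recf "recf list" | Prf recf recf | Mnf recf | Orc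

definition arg :: "nat list \<Rightarrow> nat \<Rightarrow> nat" where
  "arg xs i = (if i < length xs then xs ! i else 0)"

inductive oeval :: "(nat \<Rightarrow> nat) \<Rightarrow> recf \<Rightarrow> nat list \<Rightarrow> nat \<Rightarrow> bool" for orc where
  zero: "oeval orc Zf xs 0"
| succ: "oeval orc Sf xs (Suc (arg xs 0))"
| proj: "oeval orc (Pf i) xs (arg xs i)"
| orac: "oeval orc Orc xs (orc (arg xs 0))"
| comp: "length ys = length gs \<Longrightarrow> (\<forall>i<length gs. oeval orc (gs ! i) xs (ys ! i))
          \<Longrightarrow> oeval orc f ys z \<Longrightarrow> oeval orc (Cnf f gs) xs z"
| prim0: "oeval orc f ys y \<Longrightarrow> oeval orc (Prf f g) (0 # ys) y"
| primS: "oeval orc (Prf f g) (n # ys) y \<Longrightarrow> oeval orc g (n # y # ys) z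
          \<Longrightarrow> oeval orc (Prf f g) (Suc n # ys) z"
| mu: "oeval orc f (n # xs) 0 \<Longrightarrow> (\<forall>k<n. \<exists>y. 0 < y \<and> oeval orc f (k # xs) y)
          \<Longrightarrow> oeval orc (Mnf f) xs n"

definition computable_seq :: "(nat \<Rightarrow> nat) \<Rightarrow> bool" where
  "computable_seq p \<longleftrightarrow> (\<exists>e. \<forall>n. oeval (\<lambda>_. 0) e [n] (p n))"

text \<open>Type-2 computability of f on domain D w.r.t. representations delta, gamma
  (a representation is a relation "name p denotes a").\<close>
definition computable_on ::
  "((nat \<Rightarrow> nat) \<Rightarrow> 'a \<Rightarrow> bool) \<Rightarrow> ((nat \<Rightarrow> nat) \<Rightarrow> 'b \<Rightarrow> bool) \<Rightarrow> 'a set \<Rightarrow> ('a \<Rightarrow> 'b) \<Rightarrow> bool" where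
  "computable_on \<delta> \<gamma> D f \<longleftrightarrow>
     (\<exists>e. \<forall>p a. a \<in> D \<longrightarrow> \<delta> p a \<longrightarrow> (\<exists>q. (\<forall>n. oeval p e [n] (q n)) \<and> \<gamma> q (f a)))"

definition rat_code :: "nat \<Rightarrow> real" where
  "rat_code k = (case prod_decode k of (a, b) \<Rightarrow> of_int (int_decode a) / real (Suc b))"

definition vec_code :: "nat \<Rightarrow> real list" where
  "vec_code k = map rat_code (list_decode k)"

definition rdist :: "real list \<Rightarrow> real list \<Rightarrow> real" where
  "rdist x y = sqrt (\<Sum>i<length x. (x ! i - y ! i)^2)"

definition rball :: "nat \<Rightarrow> real list \<Rightarrow> real \<Rightarrow> real list set" where
  "rball d c r = {x. length x = d \<and> length c = d \<and> rdist x c < r}"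

definition ropen :: "nat \<Rightarrow> real list set \<Rightarrow> bool" where
  "ropen d U \<longleftrightarrow> (\<forall>x\<in>U. length x = d \<and> (\<exists>r>0. rball d x r \<subseteq> U))"

definition cauchy_name :: "nat \<Rightarrow> (nat \<Rightarrow> nat) \<Rightarrow> real list \<Rightarrow> bool" where
  "cauchy_name d p x \<longleftrightarrow> length x = d \<and>
     (\<forall>k. length (vec_code (p k)) = d \<and> (\<forall>i<d. \<bar>vec_code (p k) ! i - x ! i\<bar> \<le> (1/2)^k))"

definition theta_name :: "nat \<Rightarrow> (nat \<Rightarrow> nat) \<Rightarrow> real list set \<Rightarrow> bool" where
  "theta_name d p U \<longleftrightarrow>
     U = (\<Union>k. case prod_decode (p k) of (c, r) \<Rightarrow> rball d (vec_code c) (rat_code r))"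

definition re_open :: "nat \<Rightarrow> real list set \<Rightarrow> bool" where
  "re_open d X \<longleftrightarrow> (\<exists>p. computable_seq p \<and> theta_name d p X)"

definition rcont :: "nat \<Rightarrow> nat \<Rightarrow> real list set \<Rightarrow> (real list \<Rightarrow> real list) \<Rightarrow> bool" where
  "rcont n m X f \<longleftrightarrow> (\<forall>x\<in>X. length (f x) = m) \<and>
     (\<forall>x\<in>X. \<forall>\<epsilon>>0. \<exists>\<delta>>0. \<forall>y\<in>X. rdist y x < \<delta> \<longrightarrow> rdist (f y) (f x) < \<epsilon>)"

definition eff_open :: "nat \<Rightarrow> nat \<Rightarrow> real list set \<Rightarrow> (real list \<Rightarrow> real list) \<Rightarrow> bool" where
  "eff_open n m X f \<longleftrightarrow>
     (\<forall>U. ropen n U \<and> U \<subseteq> X \<longrightarrow> ropen m (f ` U)) \<and>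
     computable_on (theta_name n) (theta_name m) {U. ropen n U \<and> U \<subseteq> X} (\<lambda>U. f ` U)"

definition rcomputable :: "nat \<Rightarrow> nat \<Rightarrow> real list set \<Rightarrow> (real list \<Rightarrow> real list) \<Rightarrow> bool" where
  "rcomputable n m X f \<longleftrightarrow> computable_on (cauchy_name n) (cauchy_name m) X f"

end

theory Submission
  imports Defs "HOL-Analysis.Analysis"
begin

text \<open>(a) Let p be a Cauchy name of a point x0 of X. From p and an enumeration of X one can
  enumerate rational intervals inside X to the left of x0 that accumulate at x0, and likewise to
  the right. Effective openness of f turns these enumerations into enumerations of their images.
  An open continuous real function is injective, hence strictly monotone, on every interval, so
  the two images lie on opposite sides of f x0 and come arbitrarily close to it. Searching for a
  rational z and two enumerated image intervals with endpoints within 2^-k of z therefore yields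
  a 2^-k-approximation of f x0.

  (b) Coordinate projections map balls onto balls, so the components of a continuous
  effectively open map are continuous and effectively open; and if all of them were computable,
  f would be computable by running the component programs side by side.\<close>

section \<open>Relative computability\<close>

text \<open>F p a is the value on oracle p and argument vector a; argument lists xs are read as the
  zero-padded vectors arg xs, and one program has to serve all oracles satisfying P.\<close>

definition computes ::
  "((nat \<Rightarrow> nat) \<Rightarrow> bool) \<Rightarrow> recf \<Rightarrow> ((nat \<Rightarrow> nat) \<Rightarrow> (nat \<Rightarrow> nat) \<Rightarrow> nat) \<Rightarrow> bool" where
  "computes P e F \<longleftrightarrow> (\<forall>p xs. P p \<longrightarrow> oeval p e xs (F p (arg xs)))"

definition rel_computable ::
  "((nat \<Rightarrow> nat) \<Rightarrow> bool) \<Rightarrow> ((nat \<Rightarrow> nat) \<Rightarrow> (nat \<Rightarrow> nat) \<Rightarrow> nat) \<Rightarrow> bool" where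
  "rel_computable P F \<longleftrightarrow> (\<exists>e. computes P e F)"

lemma computesD: "computes P e F \<Longrightarrow> P p \<Longrightarrow> oeval p e xs (F p (arg xs))"
  by (simp add: computes_def)

lemma arg_Cons_0 [simp]: "arg (x # xs) 0 = x"
  and arg_Cons_Suc [simp]: "arg (x # xs) (Suc i) = arg xs i"
  by (simp_all add: arg_def)

lemma rel_computable_cong:
  "rel_computable P F \<Longrightarrow> (\<And>p a. P p \<Longrightarrow> F p a = G p a) \<Longrightarrow> rel_computable P G"
  by (auto simp: rel_computable_def computes_def)

lemma rel_computable_zero: "rel_computable P (\<lambda>p a. 0)"
  unfolding rel_computable_def computes_def by (blast intro: oeval.zero)

lemma rel_computable_arg: "rel_computable P (\<lambda>p a. a i)"
  unfolding rel_computable_def computes_def by (blast intro: oeval.proj)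

lemma rel_computable_compose:
  assumes "rel_computable P F" and "\<forall>G\<in>set Gs. rel_computable P G"
  shows "rel_computable P (\<lambda>p a. F p (arg (map (\<lambda>G. G p a) Gs)))"
proof -
  obtain f where f: "computes P f F"
    using assms(1) by (auto simp: rel_computable_def)
  obtain prog where prog: "\<forall>G\<in>set Gs. computes P (prog G) G"
    using assms(2) unfolding rel_computable_def by metis
  have "computes P (Cnf f (map prog Gs)) (\<lambda>p a. F p (arg (map (\<lambda>G. G p a) Gs)))"
    unfolding computes_def
  proof (intro allI impI)
    fix p xs assume "P p"
    then show "oeval p (Cnf f (map prog Gs)) xs (F p (arg (map (\<lambda>G. G p (arg xs)) Gs)))"
      using f prog by (intro oeval.comp) (auto simp: computes_def)
  qed
  then show ?thesis by (auto simp: rel_computable_def)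
qed

lemma rel_computable_compose1:
  "rel_computable P (\<lambda>p a. F p (a 0)) \<Longrightarrow> rel_computable P G \<Longrightarrow>
   rel_computable P (\<lambda>p a. F p (G p a))"
  using rel_computable_compose[of P "\<lambda>p a. F p (a 0)" "[G]"] by simp

lemma rel_computable_compose2:
  "rel_computable P (\<lambda>p a. F p (a 0) (a 1)) \<Longrightarrow> rel_computable P G \<Longrightarrow> rel_computable P H \<Longrightarrow>
   rel_computable P (\<lambda>p a. F p (G p a) (H p a))"
  using rel_computable_compose[of P "\<lambda>p a. F p (a 0) (a 1)" "[G, H]"] by (simp add: arg_def)

lemma rel_computable_Suc: "rel_computable P G \<Longrightarrow> rel_computable P (\<lambda>p a. Suc (G p a))"
proof (rule rel_computable_compose1[of P "\<lambda>p. Suc"])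
  show "rel_computable P (\<lambda>p a. Suc (a 0))"
    unfolding rel_computable_def computes_def by (blast intro: oeval.succ)
qed

lemma rel_computable_oracle: "rel_computable P G \<Longrightarrow> rel_computable P (\<lambda>p a. p (G p a))"
proof (rule rel_computable_compose1[of P "\<lambda>p. p"])
  show "rel_computable P (\<lambda>p a. p (a 0))"
    unfolding rel_computable_def computes_def by (blast intro: oeval.orac)
qed

lemma rel_computable_const: "rel_computable P (\<lambda>p a. c)"
  by (induction c) (simp add: rel_computable_zero, rule rel_computable_Suc)

lemma rel_computable_rec_nat:
  assumes "rel_computable P (\<lambda>p a. F p (a 0))" and "rel_computable P (\<lambda>p a. G p (a 0) (a 1) (a 2))"
  shows "rel_computable P (\<lambda>p a. rec_nat (F p (a 1)) (\<lambda>k y. G p k y (a 1)) (a 0))"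
proof -
  obtain f g where f: "computes P f (\<lambda>p a. F p (a 0))" and g: "computes P g (\<lambda>p a. G p (a 0) (a 1) (a 2))"
    using assms by (auto simp: rel_computable_def)
  have rec: "oeval p (Prf f g) [n, x] (rec_nat (F p x) (\<lambda>k y. G p k y x) n)" if "P p" for p n x
  proof (induction n)
    case 0
    show ?case using computesD[OF f \<open>P p\<close>, of "[x]"] by (auto intro: oeval.prim0)
  next
    case (Suc n)
    show ?case
      using oeval.primS[OF Suc computesD[OF g \<open>P p\<close>, of "[n, _, x]"]] by (simp add: arg_def)
  qed
  have "computes P (Cnf (Prf f g) [Pf 0, Pf 1]) (\<lambda>p a. rec_nat (F p (a 1)) (\<lambda>k y. G p k y (a 1)) (a 0))"
    unfolding computes_def
  proof (intro allI impI)
    fix p xs assume "P p"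
    then show "oeval p (Cnf (Prf f g) [Pf 0, Pf 1]) xs (rec_nat (F p (arg xs 1)) (\<lambda>k y. G p k y (arg xs 1)) (arg xs 0))"
      using rec[of p "arg xs 0" "arg xs 1"] oeval.proj[of p _ xs]
      by (intro oeval.comp[where ys = "[arg xs 0, arg xs 1]"]) (auto simp: less_Suc_eq)
  qed
  then show ?thesis by (auto simp: rel_computable_def)
qed

primrec subst_oracle :: "recf \<Rightarrow> recf \<Rightarrow> recf" where
  "subst_oracle g Zf = Zf"
| "subst_oracle g Sf = Sf"
| "subst_oracle g (Pf i) = Pf i"
| "subst_oracle g (Cnf f gs) = Cnf (subst_oracle g f) (map (subst_oracle g) gs)"
| "subst_oracle g (Prf f h) = Prf (subst_oracle g f) (subst_oracle g h)"
| "subst_oracle g (Mnf f) = Mnf (subst_oracle g f)"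
| "subst_oracle g Orc = Cnf g [Pf 0]"

lemma oeval_subst_oracle:
  assumes "oeval q e xs y" and "\<And>k. oeval p g [k] (q k)"
  shows "oeval p (subst_oracle g e) xs y"
  using assms(1)
proof (induction rule: oeval.induct)
  case (orac xs)
  show ?case
    using assms(2)[of "arg xs 0"] oeval.proj[of p 0 xs]
    by (auto intro!: oeval.comp[where ys = "[arg xs 0]"])
next
  case (comp ys gs xs f z)
  then show ?case by (auto intro!: oeval.comp)
qed (auto intro: oeval.intros)

text \<open>Relative computability is transitive: a program run on an oracle that is itself
  computable from p can be run on p.\<close>

lemma rel_computable_via_oracle:
  assumes "rel_computable P (\<lambda>p a. Q p (a 0))" and "\<And>p. P p \<Longrightarrow> \<forall>n. oeval (Q p) e [n] (R p n)"
  shows "rel_computable P (\<lambda>p a. R p (a 0))"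
proof -
  obtain g where g: "computes P g (\<lambda>p a. Q p (a 0))"
    using assms(1) by (auto simp: rel_computable_def)
  have "computes P (Cnf (subst_oracle g e) [Pf 0]) (\<lambda>p a. R p (a 0))"
    unfolding computes_def
  proof (intro allI impI)
    fix p xs assume "P p"
    then have "oeval p (subst_oracle g e) [arg xs 0] (R p (arg xs 0))"
      using assms(2) computesD[OF g, of p "[_]"] by (auto intro: oeval_subst_oracle)
    then show "oeval p (Cnf (subst_oracle g e) [Pf 0]) xs (R p (arg xs 0))"
      using oeval.proj[of p 0 xs] by (auto intro!: oeval.comp[where ys = "[arg xs 0]"])
  qed
  then show ?thesis by (auto simp: rel_computable_def)
qed

lemma rel_computable_unary_iff:
  "rel_computable P (\<lambda>p a. F p (a 0)) \<longleftrightarrow> (\<exists>e. \<forall>p. P p \<longrightarrow> (\<forall>n. oeval p e [n] (F p n)))"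
proof
  assume "rel_computable P (\<lambda>p a. F p (a 0))"
  then obtain e where "computes P e (\<lambda>p a. F p (a 0))" by (auto simp: rel_computable_def)
  then show "\<exists>e. \<forall>p. P p \<longrightarrow> (\<forall>n. oeval p e [n] (F p n))"
    using computesD[of P e "\<lambda>p a. F p (a 0)" _ "[_]"] by auto
next
  assume "\<exists>e. \<forall>p. P p \<longrightarrow> (\<forall>n. oeval p e [n] (F p n))"
  then obtain e where "\<And>p. P p \<Longrightarrow> \<forall>n. oeval p e [n] (F p n)" by blast
  moreover have "rel_computable P (\<lambda>p a. p (a 0))"
    by (rule rel_computable_oracle[OF rel_computable_arg])
  ultimately show "rel_computable P (\<lambda>p a. F p (a 0))"
    using rel_computable_via_oracle[of P "\<lambda>p. p" e F] by blast
qed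

lemma computable_seq_rel_computable:
  assumes "computable_seq s"
  shows "rel_computable P (\<lambda>p a. s (a 0))"
proof -
  obtain e where "\<forall>n. oeval (\<lambda>_. 0) e [n] (s n)"
    using assms by (auto simp: computable_seq_def)
  then show ?thesis
    using rel_computable_via_oracle[of P "\<lambda>p k. 0" e "\<lambda>p. s"] rel_computable_zero by simp
qed

section \<open>Arithmetic on codes\<close>

lemma rel_computable_add:
  assumes "rel_computable P G" and "rel_computable P H"
  shows "rel_computable P (\<lambda>p a. G p a + H p a)"
proof -
  have "rel_computable P (\<lambda>p a. rec_nat (a 1) (\<lambda>k y. Suc y) (a 0))"
    by (intro rel_computable_rec_nat rel_computable_arg rel_computable_Suc)
  moreover have "rec_nat x (\<lambda>k y. Suc y) n = n + x" for x n :: nat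
    by (induction n) simp_all
  ultimately have "rel_computable P (\<lambda>p a. a 0 + a 1)"
    by (rule rel_computable_cong)
  then show ?thesis using assms by (rule rel_computable_compose2)
qed

lemma rel_computable_mult:
  assumes "rel_computable P G" and "rel_computable P H"
  shows "rel_computable P (\<lambda>p a. G p a * H p a)"
proof -
  have "rel_computable P (\<lambda>p a. rec_nat 0 (\<lambda>k y. y + a 1) (a 0))"
    by (intro rel_computable_rec_nat rel_computable_const rel_computable_add rel_computable_arg)
  moreover have "rec_nat 0 (\<lambda>k y. y + x) n = n * x" for x n :: nat
    by (induction n) simp_all
  ultimately have "rel_computable P (\<lambda>p a. a 0 * a 1)"
    by (rule rel_computable_cong)
  then show ?thesis using assms by (rule rel_computable_compose2)
qed

lemma rel_computable_diff:
  assumes "rel_computable P G" and "rel_computable P H"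
  shows "rel_computable P (\<lambda>p a. G p a - H p a)"
proof -
  have "rel_computable P (\<lambda>p a. rec_nat 0 (\<lambda>k y. k) (a 0))"
    by (intro rel_computable_rec_nat rel_computable_const rel_computable_arg)
  moreover have "rec_nat 0 (\<lambda>k y. k) n = n - 1" for n :: nat
    by (cases n) simp_all
  ultimately have "rel_computable P (\<lambda>p a. a 0 - 1)"
    by (rule rel_computable_cong)
  then have "rel_computable P (\<lambda>p a. a 1 - 1)"
    by (rule rel_computable_compose1) (rule rel_computable_arg)
  then have "rel_computable P (\<lambda>p a. rec_nat (a 1) (\<lambda>k y. y - 1) (a 0))"
    by (intro rel_computable_rec_nat rel_computable_arg)
  moreover have "rec_nat x (\<lambda>k y. y - 1) n = x - n" for x n :: nat
    by (induction n) simp_all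
  ultimately have "rel_computable P (\<lambda>p a. a 1 - a 0)"
    by (rule rel_computable_cong)
  then show ?thesis
    using rel_computable_compose2[of P "\<lambda>p x y. y - x" H G] assms by simp
qed

lemma rel_computable_power2:
  assumes "rel_computable P G"
  shows "rel_computable P (\<lambda>p a. 2 ^ G p a)"
proof -
  have "rel_computable P (\<lambda>p a. rec_nat 1 (\<lambda>k y. y + y) (a 0))"
    by (intro rel_computable_rec_nat rel_computable_const rel_computable_add rel_computable_arg)
  moreover have "rec_nat 1 (\<lambda>k y. y + y) n = (2::nat) ^ n" for n
    by (induction n) simp_all
  ultimately have "rel_computable P (\<lambda>p a. 2 ^ a 0)"
    by (rule rel_computable_cong)
  then show ?thesis using assms by (rule rel_computable_compose1)
qed

definition rel_decidable :: "((nat \<Rightarrow> nat) \<Rightarrow> bool) \<Rightarrow> ((nat \<Rightarrow> nat) \<Rightarrow> (nat \<Rightarrow> nat) \<Rightarrow> bool) \<Rightarrow> bool" where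
  "rel_decidable P Q \<longleftrightarrow> rel_computable P (\<lambda>p a. of_bool (Q p a))"

lemma rel_decidable_const: "rel_decidable P (\<lambda>p a. b)"
  by (simp add: rel_decidable_def rel_computable_const)

lemma rel_decidable_less:
  assumes "rel_computable P G" and "rel_computable P H"
  shows "rel_decidable P (\<lambda>p a. G p a < H p a)"
proof -
  have "rel_computable P (\<lambda>p a. 1 - (1 - (H p a - G p a)))"
    by (intro rel_computable_diff rel_computable_const assms)
  then show ?thesis
    unfolding rel_decidable_def by (rule rel_computable_cong) auto
qed

lemma rel_decidable_Not:
  assumes "rel_decidable P Q"
  shows "rel_decidable P (\<lambda>p a. \<not> Q p a)"
proof -
  have "rel_computable P (\<lambda>p a. 1 - of_bool (Q p a))"
    using assms unfolding rel_decidable_def by (intro rel_computable_diff rel_computable_const)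
  then show ?thesis
    unfolding rel_decidable_def by (rule rel_computable_cong) auto
qed

lemma rel_decidable_conj:
  assumes "rel_decidable P Q" and "rel_decidable P R"
  shows "rel_decidable P (\<lambda>p a. Q p a \<and> R p a)"
  using rel_computable_mult[OF assms[unfolded rel_decidable_def]]
  unfolding rel_decidable_def by (rule rel_computable_cong) auto

lemma rel_decidable_disj:
  assumes "rel_decidable P Q" and "rel_decidable P R"
  shows "rel_decidable P (\<lambda>p a. Q p a \<or> R p a)"
  using rel_decidable_Not[OF rel_decidable_conj[OF assms[THEN rel_decidable_Not]]] by simp

lemma rel_decidable_le:
  assumes "rel_computable P G" and "rel_computable P H"
  shows "rel_decidable P (\<lambda>p a. G p a \<le> H p a)"
  using rel_decidable_Not[OF rel_decidable_less[OF assms(2,1)]] by (simp add: not_less)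

lemma rel_decidable_eq:
  assumes "rel_computable P G" and "rel_computable P H"
  shows "rel_decidable P (\<lambda>p a. G p a = H p a)"
  using rel_decidable_conj[OF rel_decidable_le[OF assms] rel_decidable_le[OF assms(2,1)]]
  by (simp add: order_eq_iff)

lemma rel_computable_If:
  assumes "rel_decidable P Q" and "rel_computable P G" and "rel_computable P H"
  shows "rel_computable P (\<lambda>p a. if Q p a then G p a else H p a)"
proof -
  have "rel_computable P (\<lambda>p a. G p a * of_bool (Q p a) + H p a * of_bool (\<not> Q p a))"
    using assms rel_decidable_Not[OF assms(1)] unfolding rel_decidable_def
    by (intro rel_computable_add rel_computable_mult)
  then show ?thesis by (rule rel_computable_cong) simp
qed

lemma rel_decidable_If:
  assumes "rel_decidable P C" and "rel_decidable P Q" and "rel_decidable P R"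
  shows "rel_decidable P (\<lambda>p a. if C p a then Q p a else R p a)"
  using rel_computable_If[OF assms(1) assms(2,3)[unfolded rel_decidable_def]]
  unfolding rel_decidable_def by (rule rel_computable_cong) simp

text \<open>Unbounded search; the arguments of the searched predicate are the arguments of the
  search shifted by one.\<close>

lemma rel_computable_Least:
  assumes "rel_decidable P (\<lambda>p a. Q p (a 0) (\<lambda>i. a (Suc i)))" and "\<And>p a. P p \<Longrightarrow> \<exists>n. Q p n a"
  shows "rel_computable P (\<lambda>p a. LEAST n. Q p n a)"
proof -
  obtain f where f: "computes P f (\<lambda>p a. of_bool (\<not> Q p (a 0) (\<lambda>i. a (Suc i))))"
    using rel_decidable_Not[OF assms(1)] by (auto simp: rel_decidable_def rel_computable_def)
  have shift: "(\<lambda>i. arg (n # xs) (Suc i)) = arg xs" for n xs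
    by simp
  have "computes P (Mnf f) (\<lambda>p a. LEAST n. Q p n a)"
    unfolding computes_def
  proof (intro allI impI)
    fix p xs assume "P p"
    let ?n = "LEAST n. Q p n (arg xs)"
    have f_at: "oeval p f (k # xs) (of_bool (\<not> Q p k (arg xs)))" for k
      using computesD[OF f \<open>P p\<close>, of "k # xs"] by (simp add: shift)
    show "oeval p (Mnf f) xs ?n"
    proof (rule oeval.mu)
      have "Q p ?n (arg xs)"
        using assms(2)[OF \<open>P p\<close>, of "arg xs"] by (rule LeastI_ex)
      then show "oeval p f (?n # xs) 0"
        using f_at[of ?n] by simp
      have "oeval p f (k # xs) 1" if "k < ?n" for k
        using f_at[of k] not_less_Least[OF that] by simp
      then show "\<forall>k<?n. \<exists>y. 0 < y \<and> oeval p f (k # xs) y"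
        by blast
    qed
  qed
  then show ?thesis by (auto simp: rel_computable_def)
qed

lemma rel_computable_div2:
  assumes "rel_computable P G"
  shows "rel_computable P (\<lambda>p a. G p a div 2)"
proof -
  have "rel_computable P (\<lambda>p a. LEAST q. a 0 < q + q + 2)"
  proof (rule rel_computable_Least[where Q = "\<lambda>p q b. b 0 < q + q + 2"])
    show "rel_decidable P (\<lambda>p a. a (Suc 0) < a 0 + a 0 + 2)"
      by (intro rel_decidable_less rel_computable_add rel_computable_arg rel_computable_const)
    show "\<exists>q. a 0 < q + q + 2" for a :: "nat \<Rightarrow> nat"
      by (rule exI[of _ "a 0"]) simp
  qed
  moreover have "(LEAST q. n < q + q + 2) = n div 2" for n :: nat
    by (rule Least_equality) auto
  ultimately have "rel_computable P (\<lambda>p a. a 0 div 2)"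
    by (rule rel_computable_cong)
  then show ?thesis using assms by (rule rel_computable_compose1)
qed

lemma rel_decidable_even:
  assumes "rel_computable P G"
  shows "rel_decidable P (\<lambda>p a. even (G p a))"
proof -
  have "even n \<longleftrightarrow> 2 * (n div 2) = n" for n :: nat
    by presburger
  then show ?thesis
    by (simp only:) (intro rel_decidable_eq rel_computable_mult rel_computable_div2 rel_computable_const assms)
qed

lemma rel_computable_triangle:
  assumes "rel_computable P G"
  shows "rel_computable P (\<lambda>p a. triangle (G p a))"
  unfolding triangle_def
  by (intro rel_computable_div2 rel_computable_mult rel_computable_Suc assms)

lemma rel_computable_prod_encode:
  assumes "rel_computable P G" and "rel_computable P H"
  shows "rel_computable P (\<lambda>p a. prod_encode (G p a, H p a))"
  unfolding prod_encode_def prod.case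
  by (intro rel_computable_add rel_computable_triangle assms)

lemma less_triangle_Suc: "n < triangle (Suc n)"
  by (induction n) auto

lemma prod_decode_eq_Least:
  "prod_decode n = (let s = LEAST s. n < triangle (Suc s) in (n - triangle s, s - (n - triangle s)))"
proof -
  define s where "s = (LEAST s. n < triangle (Suc s))"
  have below: "n < triangle (Suc s)"
    unfolding s_def using less_triangle_Suc by (rule LeastI)
  have above: "triangle s \<le> n"
  proof (cases s)
    case (Suc s')
    then have "\<not> n < triangle (Suc s')"
      unfolding s_def by (metis lessI not_less_Least)
    then show ?thesis using Suc by simp
  qed simp
  have "prod_encode (n - triangle s, s - (n - triangle s)) = n"
    using above below by (simp add: prod_encode_def)
  then show ?thesis
    unfolding s_def[symmetric] Let_def by (metis prod_encode_inverse)
qed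

lemma rel_computable_prod_decode:
  assumes "rel_computable P G"
  shows rel_computable_fst_prod_decode: "rel_computable P (\<lambda>p a. fst (prod_decode (G p a)))"
    and rel_computable_snd_prod_decode: "rel_computable P (\<lambda>p a. snd (prod_decode (G p a)))"
proof -
  have least: "rel_computable P (\<lambda>p a. LEAST s. a 0 < triangle (Suc s))"
  proof (rule rel_computable_Least[where Q = "\<lambda>p s b. b 0 < triangle (Suc s)"])
    show "rel_decidable P (\<lambda>p a. a (Suc 0) < triangle (Suc (a 0)))"
      by (intro rel_decidable_less rel_computable_triangle rel_computable_Suc rel_computable_arg)
    show "\<exists>s. a 0 < triangle (Suc s)" for a :: "nat \<Rightarrow> nat"
      using less_triangle_Suc by blast
  qed
  have "rel_computable P (\<lambda>p a. fst (prod_decode (a 0)))" "rel_computable P (\<lambda>p a. snd (prod_decode (a 0)))"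
    unfolding prod_decode_eq_Least Let_def fst_conv snd_conv
    by (intro rel_computable_diff rel_computable_triangle rel_computable_arg least)+
  then show "rel_computable P (\<lambda>p a. fst (prod_decode (G p a)))" "rel_computable P (\<lambda>p a. snd (prod_decode (G p a)))"
    using assms by (auto intro: rel_computable_compose1)
qed

definition list_head :: "nat \<Rightarrow> nat" where
  "list_head c = fst (prod_decode (c - 1))"

definition list_tail :: "nat \<Rightarrow> nat" where
  "list_tail c = snd (prod_decode (c - 1))"

lemma list_decode_eq_Nil_iff: "list_decode c = [] \<longleftrightarrow> c = 0"
  by (metis list_decode.simps(1) list_decode_inverse)

lemma list_decode_nonzero: "c \<noteq> 0 \<Longrightarrow> list_decode c = list_head c # list_decode (list_tail c)"
  by (cases c) (simp_all add: list_head_def list_tail_def split: prod.split)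

lemma list_decode_list_tail: "list_decode (list_tail c) = tl (list_decode c)"
proof (cases "c = 0")
  case True
  then show ?thesis by (simp add: list_tail_def prod_decode_def prod_decode_aux.simps)
qed (simp add: list_decode_nonzero)

lemma list_decode_funpow_list_tail: "list_decode ((list_tail ^^ i) c) = drop i (list_decode c)"
  by (induction i) (simp_all add: list_decode_list_tail drop_Suc tl_drop)

lemma nth_list_decode:
  assumes "i < length (list_decode c)"
  shows "list_decode c ! i = list_head ((list_tail ^^ i) c)"
proof -
  have "list_decode ((list_tail ^^ i) c) \<noteq> []"
    using assms by (simp add: list_decode_funpow_list_tail)
  then show ?thesis
    using list_decode_nonzero list_decode_eq_Nil_iff list_decode_funpow_list_tail
    by (metis Cons_nth_drop_Suc assms list.inject)
qed

lemma length_list_decode_le_iff: "length (list_decode c) \<le> m \<longleftrightarrow> (list_tail ^^ m) c = 0"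
  using list_decode_funpow_list_tail[of m c] by (simp add: list_decode_eq_Nil_iff[symmetric])

lemma rel_computable_list_head: "rel_computable P G \<Longrightarrow> rel_computable P (\<lambda>p a. list_head (G p a))"
  and rel_computable_list_tail: "rel_computable P G \<Longrightarrow> rel_computable P (\<lambda>p a. list_tail (G p a))"
  unfolding list_head_def list_tail_def
  by (intro rel_computable_prod_decode rel_computable_diff rel_computable_const; assumption)+

lemma rel_computable_funpow_list_tail:
  "rel_computable P G \<Longrightarrow> rel_computable P (\<lambda>p a. (list_tail ^^ i) (G p a))"
  by (induction i) (simp_all add: rel_computable_list_tail)

lemma rel_decidable_length_list_decode:
  assumes "rel_computable P G"
  shows "rel_decidable P (\<lambda>p a. length (list_decode (G p a)) = m)"
proof -
  have "length xs = m \<longleftrightarrow> length xs \<le> m \<and> (m = 0 \<or> \<not> length xs \<le> m - 1)" for xs :: "nat list"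
    by (cases m) auto
  then show ?thesis
    by (simp only: length_list_decode_le_iff) (intro rel_decidable_conj rel_decidable_disj rel_decidable_Not rel_decidable_eq
        rel_decidable_const rel_computable_funpow_list_tail rel_computable_const assms)
qed

lemma rel_computable_list_encode:
  "(\<And>x. x \<in> set xs \<Longrightarrow> rel_computable P (F x)) \<Longrightarrow>
   rel_computable P (\<lambda>p a. list_encode (map (\<lambda>x. F x p a) xs))"
  by (induction xs) (simp_all add: rel_computable_const rel_computable_Suc rel_computable_prod_encode)

text \<open>Integer-valued functionals are handled as differences of natural-valued ones, and
  rational-valued real ones as fractions with positive denominator; only the signs of such
  expressions are needed, not their codes.\<close>

definition rel_computable_int ::
  "((nat \<Rightarrow> nat) \<Rightarrow> bool) \<Rightarrow> ((nat \<Rightarrow> nat) \<Rightarrow> (nat \<Rightarrow> nat) \<Rightarrow> int) \<Rightarrow> bool" where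
  "rel_computable_int P Z \<longleftrightarrow> (\<exists>A B. rel_computable P A \<and> rel_computable P B \<and>
     (\<forall>p a. P p \<longrightarrow> Z p a = int (A p a) - int (B p a)))"

lemma rel_computable_intI:
  "rel_computable P A \<Longrightarrow> rel_computable P B \<Longrightarrow> (\<And>p a. P p \<Longrightarrow> Z p a = int (A p a) - int (B p a)) \<Longrightarrow>
   rel_computable_int P Z"
  unfolding rel_computable_int_def by blast

lemma rel_computable_int_of_nat: "rel_computable P G \<Longrightarrow> rel_computable_int P (\<lambda>p a. int (G p a))"
  by (rule rel_computable_intI[where B = "\<lambda>p a. 0"]) (simp_all add: rel_computable_const)

lemma rel_computable_int_decode:
  assumes "rel_computable P G"
  shows "rel_computable_int P (\<lambda>p a. int_decode (G p a))"
proof (rule rel_computable_intI)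
  show "rel_computable P (\<lambda>p a. if even (G p a) then G p a div 2 else 0)"
    and "rel_computable P (\<lambda>p a. if even (G p a) then 0 else Suc (G p a div 2))"
    by (intro rel_computable_If rel_decidable_even rel_computable_div2 rel_computable_Suc
        rel_computable_const assms)+
  show "int_decode (G p a) = int (if even (G p a) then G p a div 2 else 0) -
      int (if even (G p a) then 0 else Suc (G p a div 2))" for p a
    by (simp add: int_decode_def sum_decode_def)
qed

lemma rel_computable_int_add:
  assumes "rel_computable_int P Z" and "rel_computable_int P W"
  shows "rel_computable_int P (\<lambda>p a. Z p a + W p a)"
proof -
  obtain A B A' B' where "rel_computable P A" "rel_computable P B" "rel_computable P A'" "rel_computable P B'"
    and "\<And>p a. P p \<Longrightarrow> Z p a = int (A p a) - int (B p a) \<and> W p a = int (A' p a) - int (B' p a)"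
    using assms unfolding rel_computable_int_def by meson
  then show ?thesis
    by (intro rel_computable_intI[where A = "\<lambda>p a. A p a + A' p a" and B = "\<lambda>p a. B p a + B' p a"]
        rel_computable_add) auto
qed

lemma rel_computable_int_uminus:
  "rel_computable_int P Z \<Longrightarrow> rel_computable_int P (\<lambda>p a. - Z p a)"
  unfolding rel_computable_int_def by (metis minus_diff_eq)

lemma rel_computable_int_mult:
  assumes "rel_computable_int P Z" and "rel_computable_int P W"
  shows "rel_computable_int P (\<lambda>p a. Z p a * W p a)"
proof -
  obtain A B A' B' where "rel_computable P A" "rel_computable P B" "rel_computable P A'" "rel_computable P B'"
    and eq: "\<And>p a. P p \<Longrightarrow> Z p a = int (A p a) - int (B p a) \<and> W p a = int (A' p a) - int (B' p a)"
    using assms unfolding rel_computable_int_def by meson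
  then show ?thesis
    by (intro rel_computable_intI[where A = "\<lambda>p a. A p a * A' p a + B p a * B' p a"
          and B = "\<lambda>p a. A p a * B' p a + B p a * A' p a"] rel_computable_add rel_computable_mult)
      (simp_all add: eq algebra_simps)
qed

lemma rel_decidable_int_less:
  assumes "rel_computable_int P Z" and "rel_computable_int P W"
  shows "rel_decidable P (\<lambda>p a. Z p a < W p a)"
proof -
  obtain A B A' B' where "rel_computable P A" "rel_computable P B" "rel_computable P A'" "rel_computable P B'"
    and eq: "\<And>p a. P p \<Longrightarrow> Z p a = int (A p a) - int (B p a) \<and> W p a = int (A' p a) - int (B' p a)"
    using assms unfolding rel_computable_int_def by meson
  then have "rel_decidable P (\<lambda>p a. A p a + B' p a < A' p a + B p a)"
    by (intro rel_decidable_less rel_computable_add)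
  then show ?thesis
    unfolding rel_decidable_def by (rule rel_computable_cong) (auto simp: eq)
qed

definition rel_computable_rat ::
  "((nat \<Rightarrow> nat) \<Rightarrow> bool) \<Rightarrow> ((nat \<Rightarrow> nat) \<Rightarrow> (nat \<Rightarrow> nat) \<Rightarrow> real) \<Rightarrow> bool" where
  "rel_computable_rat P R \<longleftrightarrow> (\<exists>Z D. rel_computable_int P Z \<and> rel_computable P D \<and>
     (\<forall>p a. P p \<longrightarrow> 0 < D p a \<and> R p a = of_int (Z p a) / of_nat (D p a)))"

lemma rel_computable_ratI:
  "rel_computable_int P Z \<Longrightarrow> rel_computable P D \<Longrightarrow>
   (\<And>p a. P p \<Longrightarrow> 0 < D p a \<and> R p a = of_int (Z p a) / of_nat (D p a)) \<Longrightarrow> rel_computable_rat P R"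
  unfolding rel_computable_rat_def by blast

lemma rel_computable_rat_code:
  assumes "rel_computable P G"
  shows "rel_computable_rat P (\<lambda>p a. rat_code (G p a))"
proof (rule rel_computable_ratI)
  show "rel_computable_int P (\<lambda>p a. int_decode (fst (prod_decode (G p a))))"
    by (intro rel_computable_int_decode rel_computable_fst_prod_decode assms)
  show "rel_computable P (\<lambda>p a. Suc (snd (prod_decode (G p a))))"
    by (intro rel_computable_Suc rel_computable_snd_prod_decode assms)
qed (simp add: rat_code_def split: prod.split)

lemma rel_computable_rat_add:
  assumes "rel_computable_rat P R" and "rel_computable_rat P S"
  shows "rel_computable_rat P (\<lambda>p a. R p a + S p a)"
proof -
  obtain Z D Z' D' where "rel_computable_int P Z" "rel_computable P D" "rel_computable_int P Z'" "rel_computable P D'"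
    and eq: "\<And>p a. P p \<Longrightarrow> 0 < D p a \<and> R p a = of_int (Z p a) / of_nat (D p a) \<and>
      0 < D' p a \<and> S p a = of_int (Z' p a) / of_nat (D' p a)"
    using assms unfolding rel_computable_rat_def by meson
  then show ?thesis
    by (intro rel_computable_ratI[where Z = "\<lambda>p a. Z p a * int (D' p a) + Z' p a * int (D p a)"
          and D = "\<lambda>p a. D p a * D' p a"] rel_computable_int_add rel_computable_int_mult
        rel_computable_int_of_nat rel_computable_mult)
      (auto simp: field_simps)
qed

lemma rel_computable_rat_uminus:
  "rel_computable_rat P R \<Longrightarrow> rel_computable_rat P (\<lambda>p a. - R p a)"
  unfolding rel_computable_rat_def
  by (metis (no_types, lifting) minus_divide_left of_int_minus rel_computable_int_uminus)

lemma rel_computable_rat_diff: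
  "rel_computable_rat P R \<Longrightarrow> rel_computable_rat P S \<Longrightarrow> rel_computable_rat P (\<lambda>p a. R p a - S p a)"
  using rel_computable_rat_add[of P R "\<lambda>p a. - S p a"] rel_computable_rat_uminus by simp

lemma rel_computable_rat_half_power:
  assumes "rel_computable P N"
  shows "rel_computable_rat P (\<lambda>p a. (1 / 2) ^ N p a)"
  by (rule rel_computable_ratI[where Z = "\<lambda>p a. 1" and D = "\<lambda>p a. 2 ^ N p a"])
    (auto intro: rel_computable_power2 assms rel_computable_int_of_nat[where G = "\<lambda>p a. 1", simplified]
      rel_computable_const simp: power_one_over)

lemma rel_decidable_rat_less:
  assumes "rel_computable_rat P R" and "rel_computable_rat P S"
  shows "rel_decidable P (\<lambda>p a. R p a < S p a)"
proof -
  obtain Z D Z' D' where "rel_computable_int P Z" "rel_computable P D" "rel_computable_int P Z'" "rel_computable P D'"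
    and eq: "\<And>p a. P p \<Longrightarrow> 0 < D p a \<and> R p a = of_int (Z p a) / of_nat (D p a) \<and>
      0 < D' p a \<and> S p a = of_int (Z' p a) / of_nat (D' p a)"
    using assms unfolding rel_computable_rat_def by meson
  then have dec: "rel_decidable P (\<lambda>p a. Z p a * int (D' p a) < Z' p a * int (D p a))"
    by (intro rel_decidable_int_less rel_computable_int_mult rel_computable_int_of_nat)
  have iff: "R p a < S p a \<longleftrightarrow> Z p a * int (D' p a) < Z' p a * int (D p a)" if "P p" for p a
  proof -
    have "R p a < S p a \<longleftrightarrow> real_of_int (Z p a * int (D' p a)) < real_of_int (Z' p a * int (D p a))"
      using eq[OF that] by (simp add: field_simps)
    then show ?thesis by linarith
  qed
  show ?thesis
    using dec unfolding rel_decidable_def by (rule rel_computable_cong) (simp add: iff)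
qed

lemma rel_decidable_rat_le:
  "rel_computable_rat P R \<Longrightarrow> rel_computable_rat P S \<Longrightarrow> rel_decidable P (\<lambda>p a. R p a \<le> S p a)"
  using rel_decidable_Not[OF rel_decidable_rat_less[of P S R]] by (simp add: not_less)

lemma rel_decidable_rat_abs_le:
  assumes "rel_computable_rat P R" and "rel_computable_rat P S"
  shows "rel_decidable P (\<lambda>p a. \<bar>R p a\<bar> \<le> S p a)"
  unfolding abs_le_iff
  by (intro rel_decidable_conj rel_decidable_rat_le rel_computable_rat_uminus assms)

section \<open>Balls in real vector space and their codes\<close>

definition ball_of_code :: "nat \<Rightarrow> nat \<Rightarrow> real list set" where
  "ball_of_code d w = rball d (vec_code (fst (prod_decode w))) (rat_code (snd (prod_decode w)))"

lemma theta_name_iff: "theta_name d p U \<longleftrightarrow> U = (\<Union>k. ball_of_code d (p k))"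
  by (simp add: theta_name_def ball_of_code_def case_prod_beta)

lemma ball_of_code_0: "0 < d \<Longrightarrow> ball_of_code d 0 = {}"
  by (simp add: ball_of_code_def rball_def vec_code_def prod_decode_def prod_decode_aux.simps)

lemma ropen_Union: "(\<And>U. U \<in> \<U> \<Longrightarrow> ropen d U) \<Longrightarrow> ropen d (\<Union>\<U>)"
  unfolding ropen_def by blast

lemma rdist_singleton [simp]: "rdist [s] [t] = \<bar>s - t\<bar>"
  by (simp add: rdist_def)

lemma rball_singleton: "rball 1 [c] r = (\<lambda>t. [t]) ` ball c r"
  by (auto simp: rball_def length_Suc_conv dist_real_def abs_minus_commute)

lemma ropen_singleton_image_iff: "ropen 1 ((\<lambda>t. [t]) ` A) \<longleftrightarrow> open A"
proof -
  have "rball 1 [a] r \<subseteq> (\<lambda>t. [t]) ` A \<longleftrightarrow> ball a r \<subseteq> A" for a r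
    unfolding rball_singleton by auto
  then show ?thesis
    unfolding ropen_def open_contains_ball by (simp del: One_nat_def)
qed

lemma coord_le_rdist:
  assumes "i < length x"
  shows "\<bar>x ! i - y ! i\<bar> \<le> rdist x y"
proof -
  have "(x ! i - y ! i)\<^sup>2 \<le> (\<Sum>j<length x. (x ! j - y ! j)\<^sup>2)"
    using assms by (intro member_le_sum) auto
  then show ?thesis
    unfolding rdist_def by (metis real_sqrt_abs real_sqrt_le_mono)
qed

lemma rdist_list_update:
  assumes "i < length c"
  shows "rdist (c[i := t]) c = \<bar>t - c ! i\<bar>"
proof -
  have "(\<Sum>j<length c. (c[i := t] ! j - c ! j)\<^sup>2) = (\<Sum>j<length c. if j = i then (t - c ! i)\<^sup>2 else 0)"
    by (rule sum.cong) (auto simp: nth_list_update)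
  then show ?thesis
    using assms by (simp add: rdist_def)
qed

lemma image_nth_rball:
  assumes "length c = m" and "i < m"
  shows "(\<lambda>y. [y ! i]) ` rball m c r = rball 1 [c ! i] r"
proof
  show "(\<lambda>y. [y ! i]) ` rball m c r \<subseteq> rball 1 [c ! i] r"
  proof
    fix z assume "z \<in> (\<lambda>y. [y ! i]) ` rball m c r"
    then obtain y where "z = [y ! i]" "length y = m" "rdist y c < r"
      by (auto simp: rball_def)
    moreover have "\<bar>y ! i - c ! i\<bar> \<le> rdist y c"
      using assms \<open>length y = m\<close> by (intro coord_le_rdist) simp
    ultimately show "z \<in> rball 1 [c ! i] r"
      unfolding rball_singleton by (simp add: dist_real_def abs_minus_commute)
  qed
  show "rball 1 [c ! i] r \<subseteq> (\<lambda>y. [y ! i]) ` rball m c r"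
  proof
    fix z assume "z \<in> rball 1 [c ! i] r"
    then obtain t where "z = [t]" and "\<bar>t - c ! i\<bar> < r"
      unfolding rball_singleton by (auto simp: dist_real_def abs_minus_commute)
    moreover have "c[i := t] \<in> rball m c r"
      using assms \<open>\<bar>t - c ! i\<bar> < r\<close> by (simp add: rball_def rdist_list_update)
    ultimately show "z \<in> (\<lambda>y. [y ! i]) ` rball m c r"
      using assms by (intro image_eqI[of _ _ "c[i := t]"]) auto
  qed
qed

lemma ropen_image_nth:
  assumes "ropen m V" and "i < m"
  shows "ropen 1 ((\<lambda>y. [y ! i]) ` V)"
  unfolding ropen_def
proof (intro ballI conjI)
  fix z assume "z \<in> (\<lambda>y. [y ! i]) ` V"
  then obtain y where "y \<in> V" and z: "z = [y ! i]" by blast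
  then obtain r where "r > 0" "rball m y r \<subseteq> V" "length y = m"
    using assms(1) by (auto simp: ropen_def)
  then show "\<exists>r>0. rball 1 z r \<subseteq> (\<lambda>y. [y ! i]) ` V"
    using image_nth_rball[of y m i r] assms(2) z by (metis image_mono)
qed (auto)

lemma cauchy_name_unique:
  assumes "cauchy_name d p x" and "cauchy_name d p y"
  shows "x = y"
proof (rule nth_equalityI)
  show "length x = length y"
    using assms by (simp add: cauchy_name_def)
  fix i assume "i < length x"
  then have le: "\<bar>x ! i - y ! i\<bar> \<le> 2 * (1 / 2) ^ k" for k
    using assms unfolding cauchy_name_def
    by (smt (verit, best) field_sum_of_halves)
  show "x ! i = y ! i"
  proof (rule ccontr)
    assume "x ! i \<noteq> y ! i"
    then obtain k where "(1 / 2) ^ k < \<bar>x ! i - y ! i\<bar> / 2"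
      using real_arch_pow_inv[of "\<bar>x ! i - y ! i\<bar> / 2" "1 / 2"] by auto
    then show False
      using le[of k] by simp
  qed
qed

lemma vec_code_list_encode [simp]: "vec_code (list_encode xs) = map rat_code xs"
  by (simp add: vec_code_def)

lemma cauchy_name_of_components:
  assumes "length x = m" and "\<And>i. i < m \<Longrightarrow> cauchy_name 1 (q i) [x ! i]"
  shows "cauchy_name m (\<lambda>k. list_encode (map (\<lambda>i. list_head (q i k)) [0..<m])) x"
  unfolding cauchy_name_def
proof (intro conjI allI impI)
  fix k i assume "i < m"
  then have "length (vec_code (q i k)) = 1" "\<bar>vec_code (q i k) ! 0 - x ! i\<bar> \<le> (1 / 2) ^ k"
    using assms(2) unfolding cauchy_name_def by auto
  then show "\<bar>vec_code (list_encode (map (\<lambda>i. list_head (q i k)) [0..<m])) ! i - x ! i\<bar> \<le> (1 / 2) ^ k"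
    using \<open>i < m\<close> nth_list_decode[of 0 "q i k"] by (simp add: vec_code_def)
qed (simp_all add: assms(1))

section \<open>Components of vector-valued maps\<close>

definition code_nth :: "nat \<Rightarrow> nat \<Rightarrow> nat \<Rightarrow> nat" where
  "code_nth m i w = (if length (list_decode (fst (prod_decode w))) = m
     then prod_encode (list_encode [list_head ((list_tail ^^ i) (fst (prod_decode w)))], snd (prod_decode w))
     else 0)"

lemma ball_of_code_code_nth:
  assumes "i < m"
  shows "ball_of_code 1 (code_nth m i w) = (\<lambda>y. [y ! i]) ` ball_of_code m w"
proof (cases "length (list_decode (fst (prod_decode w))) = m")
  case True
  let ?c = "fst (prod_decode w)"
  have len: "length (vec_code ?c) = m"
    using True by (simp add: vec_code_def)
  have "vec_code (list_encode [list_head ((list_tail ^^ i) ?c)]) = [vec_code ?c ! i]"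
    using True assms by (simp add: vec_code_def nth_list_decode)
  then show ?thesis
    using True image_nth_rball[OF len assms] by (simp add: code_nth_def ball_of_code_def)
next
  case False
  then have "ball_of_code m w = {}"
    by (auto simp: ball_of_code_def rball_def vec_code_def)
  then show ?thesis
    using False ball_of_code_0[of 1] by (simp add: code_nth_def)
qed

lemma rel_computable_code_nth: "rel_computable P (\<lambda>p a. code_nth m i (a 0))"
  unfolding code_nth_def list_encode.simps
  by (intro rel_computable_If rel_decidable_length_list_decode rel_computable_prod_encode
      rel_computable_Suc rel_computable_list_head
      rel_computable_funpow_list_tail rel_computable_prod_decode rel_computable_arg rel_computable_const)

lemma computable_on_postcompose:
  assumes "computable_on \<delta> \<gamma> D F" and "rel_computable (\<lambda>_. True) (\<lambda>p a. h (a 0))"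
    and "\<And>q b. \<gamma> q b \<Longrightarrow> \<gamma>' (\<lambda>k. h (q k)) (G b)"
  shows "computable_on \<delta> \<gamma>' D (\<lambda>a. G (F a))"
proof -
  obtain e where e: "\<forall>p a. a \<in> D \<longrightarrow> \<delta> p a \<longrightarrow> (\<exists>q. (\<forall>n. oeval p e [n] (q n)) \<and> \<gamma> q (F a))"
    using assms(1) by (auto simp: computable_on_def)
  obtain hp where hp: "computes (\<lambda>_. True) hp (\<lambda>p a. h (a 0))"
    using assms(2) by (auto simp: rel_computable_def)
  have "\<exists>q. (\<forall>n. oeval p (Cnf hp [e]) [n] (q n)) \<and> \<gamma>' q (G (F a))" if a: "a \<in> D" "\<delta> p a" for p a
  proof -
    obtain q where q: "\<forall>n. oeval p e [n] (q n)" "\<gamma> q (F a)"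
      using e a by blast
    have "oeval p (Cnf hp [e]) [n] (h (q n))" for n
      using q(1) computesD[OF hp, of p "[q n]"] by (intro oeval.comp[where ys = "[q n]"]) auto
    then show ?thesis
      using assms(3)[OF q(2)] by (intro exI[of _ "\<lambda>n. h (q n)"] conjI) auto
  qed
  then show ?thesis
    unfolding computable_on_def by blast
qed

lemma rcont_component:
  assumes "rcont n m X f" and "i < m"
  shows "rcont n 1 X (\<lambda>x. [f x ! i])"
  unfolding rcont_def
proof (intro conjI ballI allI impI)
  fix x and \<epsilon> :: real assume "x \<in> X" "\<epsilon> > 0"
  then obtain \<delta> where "\<delta> > 0" and \<delta>: "\<forall>y\<in>X. rdist y x < \<delta> \<longrightarrow> rdist (f y) (f x) < \<epsilon>"
    using assms(1) unfolding rcont_def by blast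
  have "\<bar>f y ! i - f x ! i\<bar> \<le> rdist (f y) (f x)" if "y \<in> X" for y
    using assms that by (intro coord_le_rdist) (simp add: rcont_def)
  then show "\<exists>\<delta>>0. \<forall>y\<in>X. rdist y x < \<delta> \<longrightarrow> rdist [f y ! i] [f x ! i] < \<epsilon>"
    using \<open>\<delta> > 0\<close> \<delta> by force
qed simp

lemma eff_open_component:
  assumes "eff_open n m X f" and "i < m"
  shows "eff_open n 1 X (\<lambda>x. [f x ! i])"
proof -
  have image: "(\<lambda>x. [f x ! i]) ` U = (\<lambda>y. [y ! i]) ` (f ` U)" for U
    by (simp add: image_image)
  have "ropen 1 ((\<lambda>x. [f x ! i]) ` U)" if "ropen n U" "U \<subseteq> X" for U
    using assms that unfolding image by (intro ropen_image_nth) (auto simp: eff_open_def)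
  moreover have "computable_on (theta_name n) (theta_name 1) {U. ropen n U \<and> U \<subseteq> X}
      (\<lambda>U. (\<lambda>y. [y ! i]) ` (f ` U))"
  proof (rule computable_on_postcompose[where \<gamma> = "theta_name m" and F = "\<lambda>U. f ` U"])
    show "computable_on (theta_name n) (theta_name m) {U. ropen n U \<and> U \<subseteq> X} (\<lambda>U. f ` U)"
      using assms(1) by (simp add: eff_open_def)
    show "rel_computable (\<lambda>_. True) (\<lambda>p a. code_nth m i (a 0))"
      by (rule rel_computable_code_nth)
    show "theta_name 1 (\<lambda>k. code_nth m i (q k)) ((\<lambda>y. [y ! i]) ` V)" if "theta_name m q V" for q V
      using that unfolding theta_name_iff by (simp add: image_UN ball_of_code_code_nth[OF assms(2), simplified])
  qed
  ultimately show ?thesis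
    unfolding eff_open_def image by blast
qed

lemma rcomputable_of_components:
  assumes "rcont n m X f" and "\<forall>i<m. rcomputable n 1 X (\<lambda>x. [f x ! i])"
  shows "rcomputable n m X f"
proof -
  define P where "P p \<longleftrightarrow> (\<exists>x\<in>X. cauchy_name n p x)" for p
  obtain E where E: "\<forall>i<m. \<forall>p x. x \<in> X \<longrightarrow> cauchy_name n p x \<longrightarrow>
      (\<exists>q. (\<forall>k. oeval p (E i) [k] (q k)) \<and> cauchy_name 1 q [f x ! i])"
    using assms(2) unfolding rcomputable_def computable_on_def by metis
  text \<open>Since a Cauchy name determines its point, the output of E i on p can be chosen
    independently of the point.\<close>
  define Q where "Q i p = (SOME q. (\<forall>k. oeval p (E i) [k] (q k)) \<and>
    (\<forall>x\<in>X. cauchy_name n p x \<longrightarrow> cauchy_name 1 q [f x ! i]))" for i p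
  have Q: "(\<forall>k. oeval p (E i) [k] (Q i p k)) \<and> cauchy_name 1 (Q i p) [f x ! i]"
    if x: "i < m" "x \<in> X" "cauchy_name n p x" for i p x
  proof -
    obtain q where "\<forall>k. oeval p (E i) [k] (q k)" "cauchy_name 1 q [f x ! i]"
      using E x by blast
    then have "\<exists>q. (\<forall>k. oeval p (E i) [k] (q k)) \<and> (\<forall>x\<in>X. cauchy_name n p x \<longrightarrow> cauchy_name 1 q [f x ! i])"
      using cauchy_name_unique[OF x(3)] by blast
    then have "(\<forall>k. oeval p (E i) [k] (Q i p k)) \<and> (\<forall>x\<in>X. cauchy_name n p x \<longrightarrow> cauchy_name 1 (Q i p) [f x ! i])"
      unfolding Q_def by (rule someI_ex)
    then show ?thesis
      using x by blast
  qed
  have "rel_computable P (\<lambda>p a. Q i p (a 0))" if "i < m" for i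
    unfolding rel_computable_unary_iff P_def using Q[OF that] by blast
  then have "rel_computable P (\<lambda>p a. list_encode (map (\<lambda>i. list_head (Q i p (a 0))) [0..<m]))"
    by (intro rel_computable_list_encode rel_computable_list_head) auto
  then obtain e where e: "\<forall>p. P p \<longrightarrow> (\<forall>k. oeval p e [k] (list_encode (map (\<lambda>i. list_head (Q i p k)) [0..<m])))"
    using rel_computable_unary_iff[of P "\<lambda>p k. list_encode (map (\<lambda>i. list_head (Q i p k)) [0..<m])"] by blast
  have name: "cauchy_name m (\<lambda>k. list_encode (map (\<lambda>i. list_head (Q i p k)) [0..<m])) (f x)"
    if "x \<in> X" "cauchy_name n p x" for p x
    using assms(1) that Q by (intro cauchy_name_of_components) (auto simp: rcont_def)
  show ?thesis
    unfolding rcomputable_def computable_on_def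
  proof (intro exI[of _ e] allI impI)
    fix p x assume "x \<in> X" "cauchy_name n p x"
    then show "\<exists>q. (\<forall>k. oeval p e [k] (q k)) \<and> cauchy_name m q (f x)"
      using e name unfolding P_def
      by (intro exI[of _ "\<lambda>k. list_encode (map (\<lambda>i. list_head (Q i p k)) [0..<m])"]) blast
  qed
qed

section \<open>Open continuous functions on real intervals\<close>

lemma open_map_inj_on_interval:
  fixes g :: "real \<Rightarrow> real"
  assumes I: "is_interval I" and cont: "continuous_on I g"
    and open_map: "\<And>U. open U \<Longrightarrow> U \<subseteq> I \<Longrightarrow> open (g ` U)"
  shows "inj_on g I"
proof (rule linorder_inj_onI')
  fix s t assume "s \<in> I" "t \<in> I" "s < t"
  have sub: "{s..t} \<subseteq> I"
    using mem_is_interval_1_I[OF I \<open>s \<in> I\<close> \<open>t \<in> I\<close>] by (simp add: subset_iff)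
  have "continuous_on {s..t} g"
    using cont sub by (rule continuous_on_subset)
  moreover have ne: "{s..t} \<noteq> {}"
    using \<open>s < t\<close> by simp
  ultimately obtain M m where M: "M \<in> {s..t}" "\<forall>y\<in>{s..t}. g y \<le> g M"
    and m: "m \<in> {s..t}" "\<forall>y\<in>{s..t}. g m \<le> g y"
    using continuous_attains_sup[OF compact_Icc] continuous_attains_inf[OF compact_Icc] by blast
  text \<open>The image of the open interval is an open subset of [g m, g M], hence misses both
    extreme values; so they are attained only at the endpoints.\<close>
  have "g ` {s<..<t} \<subseteq> {g m..g M}"
  proof (rule image_subsetI)
    fix y assume "y \<in> {s<..<t}"
    then show "g y \<in> {g m..g M}"
      using M(2) m(2) by simp
  qed
  moreover have "open (g ` {s<..<t})"
    using sub by (intro open_map) auto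
  ultimately have "g ` {s<..<t} \<subseteq> interior {g m..g M}"
    by (rule interior_maximal)
  then have inner: "g ` {s<..<t} \<subseteq> {g m<..<g M}"
    by simp
  have "g M \<notin> g ` {s<..<t}" "g m \<notin> g ` {s<..<t}"
    using inner by auto
  then have "M \<notin> {s<..<t}" "m \<notin> {s<..<t}"
    by auto
  then have "M = s \<or> M = t" "m = s \<or> m = t"
    using M(1) m(1) by auto
  show "g s \<noteq> g t"
  proof
    assume "g s = g t"
    then have "{g m<..<g M} = {}"
      using \<open>M = s \<or> M = t\<close> \<open>m = s \<or> m = t\<close> by auto
    moreover have "(s + t) / 2 \<in> {s<..<t}"
      using \<open>s < t\<close> by simp
    ultimately show False
      using inner by blast
  qed
qed

lemma open_map_strict_mono_on_interval:
  fixes g :: "real \<Rightarrow> real"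
  assumes "is_interval I" and "continuous_on I g"
    and "\<And>U. open U \<Longrightarrow> U \<subseteq> I \<Longrightarrow> open (g ` U)"
  shows "strict_mono_on I g \<or> strict_antimono_on I g"
  using assms injective_eq_monotone_map open_map_inj_on_interval by blast

section \<open>Computing a continuous effectively open real function\<close>

text \<open>Keep the dimension 1 in ropen 1, ball_of_code 1 etc. from being rewritten to Suc 0,
  which would block the lemmas about one-dimensional balls.\<close>

declare One_nat_def [simp del]

lemma eff_open_rel_computable:
  assumes "eff_open n m X f" and "rel_computable P (\<lambda>p a. N p (a 0))"
    and "\<And>p. P p \<Longrightarrow> theta_name n (N p) (U p) \<and> ropen n (U p) \<and> U p \<subseteq> X"
  shows "\<exists>V. rel_computable P (\<lambda>p a. V p (a 0)) \<and> (\<forall>p. P p \<longrightarrow> theta_name m (V p) (f ` U p))"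
proof -
  obtain e where e: "\<forall>q U. U \<in> {U. ropen n U \<and> U \<subseteq> X} \<longrightarrow> theta_name n q U \<longrightarrow>
      (\<exists>r. (\<forall>k. oeval q e [k] (r k)) \<and> theta_name m r (f ` U))"
    using assms(1) unfolding eff_open_def computable_on_def by blast
  define V where "V p = (SOME r. (\<forall>k. oeval (N p) e [k] (r k)) \<and> theta_name m r (f ` U p))" for p
  have V: "(\<forall>k. oeval (N p) e [k] (V p k)) \<and> theta_name m (V p) (f ` U p)" if "P p" for p
  proof -
    have "\<exists>r. (\<forall>k. oeval (N p) e [k] (r k)) \<and> theta_name m r (f ` U p)"
      using assms(3)[OF that] by (intro e[rule_format]) simp_all
    then show ?thesis
      unfolding V_def by (rule someI_ex)
  qed
  then have "rel_computable P (\<lambda>p a. V p (a 0))"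
    using rel_computable_via_oracle[of P N e V, OF assms(2)] by blast
  then show ?thesis
    using V by blast
qed

definition ival_code :: "nat \<Rightarrow> bool" where
  "ival_code w \<longleftrightarrow> length (list_decode (fst (prod_decode w))) = 1"

definition ival_lo :: "nat \<Rightarrow> real" where
  "ival_lo w = rat_code (list_head (fst (prod_decode w))) - rat_code (snd (prod_decode w))"

definition ival_hi :: "nat \<Rightarrow> real" where
  "ival_hi w = rat_code (list_head (fst (prod_decode w))) + rat_code (snd (prod_decode w))"

lemma vec_code_singleton: "length (list_decode c) = 1 \<Longrightarrow> vec_code c = [rat_code (list_head c)]"
  using nth_list_decode[of 0 c] by (cases "list_decode c") (auto simp: vec_code_def)

lemma ball_of_code_1:
  "ball_of_code 1 w = (if ival_code w then (\<lambda>t. [t]) ` {ival_lo w<..<ival_hi w} else {})"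
proof (cases "ival_code w")
  case True
  then have "vec_code (fst (prod_decode w)) = [rat_code (list_head (fst (prod_decode w)))]"
    by (simp add: ival_code_def vec_code_singleton)
  then show ?thesis
    using True unfolding ball_of_code_def
    by (simp add: rball_singleton ival_lo_def ival_hi_def ball_eq_greaterThanLessThan)
next
  case False
  then show ?thesis
    by (auto simp: ball_of_code_def rball_def ival_code_def vec_code_def)
qed

lemma ropen_ball_of_code_1: "ropen 1 (ball_of_code 1 w)"
  unfolding ball_of_code_1 by (simp add: ropen_singleton_image_iff) (simp add: ropen_def)

lemma rat_code_surj:
  assumes "q \<in> \<rat>"
  obtains u where "rat_code u = q"
proof -
  obtain a b where "b > 0" "q = of_int a / of_int b"
    using assms by (auto elim: Rats_cases')
  then have "rat_code (prod_encode (int_encode a, nat b - 1)) = q"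
    by (simp add: rat_code_def Suc_diff_1)
  then show ?thesis by (rule that)
qed

lemma ival_code_between:
  assumes "\<alpha> < \<beta>"
  obtains w where "ival_code w" "\<alpha> < ival_lo w" "ival_lo w < ival_hi w" "ival_hi w < \<beta>"
proof -
  obtain a where a: "a \<in> \<rat>" "\<alpha> < a" "a < \<beta>"
    using Rats_dense_in_real[OF assms] by blast
  obtain b where b: "b \<in> \<rat>" "a < b" "b < \<beta>"
    using Rats_dense_in_real[OF a(3)] by blast
  have "(a + b) / 2 \<in> \<rat>" "(b - a) / 2 \<in> \<rat>"
    using a(1) b(1) by simp_all
  then obtain c r where "rat_code c = (a + b) / 2" "rat_code r = (b - a) / 2"
    by (metis rat_code_surj)
  then have "ival_code (prod_encode (list_encode [c], r))" "ival_lo (prod_encode (list_encode [c], r)) = a"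
    "ival_hi (prod_encode (list_encode [c], r)) = b"
    by (simp_all add: ival_code_def ival_lo_def ival_hi_def list_head_def field_simps)
  then show ?thesis
    using a b by (intro that[of "prod_encode (list_encode [c], r)"]) simp_all
qed

definition name_approx :: "(nat \<Rightarrow> nat) \<Rightarrow> nat \<Rightarrow> real" where
  "name_approx p j = rat_code (list_head (p j))"

lemma cauchy_name_1_iff:
  "cauchy_name 1 p [x] \<longleftrightarrow> (\<forall>j. length (list_decode (p j)) = 1 \<and> \<bar>name_approx p j - x\<bar> \<le> (1 / 2) ^ j)"
proof -
  have "length (vec_code c) = 1 \<and> (\<forall>i<1. \<bar>vec_code c ! i - [x] ! i\<bar> \<le> h) \<longleftrightarrow>
      length (list_decode c) = 1 \<and> \<bar>rat_code (list_head c) - x\<bar> \<le> h" for c h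
    using vec_code_singleton[of c] by (auto simp: vec_code_def)
  then show ?thesis
    unfolding cauchy_name_def name_approx_def by simp
qed

locale eff_open_real_fun =
  fixes X :: "real list set" and f :: "real list \<Rightarrow> real list" and enum :: "nat \<Rightarrow> nat"
  assumes computable_seq_enum: "computable_seq enum" and enum_names_X: "theta_name 1 enum X"
    and cont: "rcont 1 1 X f" and eff_open: "eff_open 1 1 X f"
begin

lemma X_eq_enum: "X = (\<Union>k. ball_of_code 1 (enum k))"
  using enum_names_X by (simp add: theta_name_iff)

lemma rel_computable_enum: "rel_computable P G \<Longrightarrow> rel_computable P (\<lambda>p a. enum (G p a))"
  by (rule rel_computable_compose1[OF computable_seq_rel_computable[OF computable_seq_enum]])

definition S :: "real set" where
  "S = {t. [t] \<in> X}"

definition g :: "real \<Rightarrow> real" where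
  "g t = hd (f [t])"

lemma singleton_image_S: "(\<lambda>t. [t]) ` S = X"
proof -
  have "X \<subseteq> range (\<lambda>t. [t])"
    by (subst X_eq_enum, unfold ball_of_code_1) auto
  then show ?thesis
    unfolding S_def by auto
qed

lemma f_singleton: "[t] \<in> X \<Longrightarrow> f [t] = [g t]"
  using cont by (cases "f [t]") (auto simp: rcont_def g_def)

lemma continuous_on_g: "continuous_on S g"
  unfolding continuous_on_iff dist_real_def
proof (intro ballI allI impI)
  fix x and \<epsilon> :: real assume "x \<in> S" "\<epsilon> > 0"
  then obtain \<delta> where "\<delta> > 0" and \<delta>: "\<forall>y\<in>X. rdist y [x] < \<delta> \<longrightarrow> rdist (f y) (f [x]) < \<epsilon>"
    using cont unfolding rcont_def S_def by blast
  show "\<exists>\<delta>>0. \<forall>y\<in>S. \<bar>y - x\<bar> < \<delta> \<longrightarrow> \<bar>g y - g x\<bar> < \<epsilon>"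
  proof (intro exI[of _ \<delta>] conjI ballI impI)
    fix y assume "y \<in> S" "\<bar>y - x\<bar> < \<delta>"
    then have "rdist (f [y]) (f [x]) < \<epsilon>"
      using \<delta> by (simp add: S_def)
    then show "\<bar>g y - g x\<bar> < \<epsilon>"
      using \<open>x \<in> S\<close> \<open>y \<in> S\<close> by (simp add: S_def f_singleton)
  qed (rule \<open>\<delta> > 0\<close>)
qed

lemma open_image_g: "open U \<Longrightarrow> U \<subseteq> S \<Longrightarrow> open (g ` U)"
proof -
  assume "open U" "U \<subseteq> S"
  then have "ropen 1 (f ` (\<lambda>t. [t]) ` U)"
    using eff_open unfolding eff_open_def
    by (metis singleton_image_S image_mono ropen_singleton_image_iff)
  moreover have "f ` (\<lambda>t. [t]) ` U = (\<lambda>t. [t]) ` g ` U"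
    using \<open>U \<subseteq> S\<close> by (force simp: S_def f_singleton)
  ultimately show ?thesis
    by (simp only: ropen_singleton_image_iff)
qed

text \<open>For a name p of x0 the pieces on one side form an open set computable from p that lies on
  that side of x0, in the connected component of x0 in S, and accumulates at x0.\<close>

definition side_piece :: "bool \<Rightarrow> (nat \<Rightarrow> nat) \<Rightarrow> nat \<Rightarrow> nat \<Rightarrow> nat \<Rightarrow> bool" where
  "side_piece left p w k j \<longleftrightarrow> ival_code (enum k)
     \<and> ival_lo (enum k) < name_approx p j - (1 / 2) ^ j \<and> name_approx p j + (1 / 2) ^ j < ival_hi (enum k)
     \<and> ival_lo (enum k) \<le> ival_lo w \<and> ival_hi w \<le> ival_hi (enum k)
     \<and> (if left then ival_hi w \<le> name_approx p j - (1 / 2) ^ j else name_approx p j + (1 / 2) ^ j \<le> ival_lo w)"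

definition side_code :: "bool \<Rightarrow> (nat \<Rightarrow> nat) \<Rightarrow> nat \<Rightarrow> nat" where
  "side_code left p t =
     (if side_piece left p (fst (prod_decode t)) (fst (prod_decode (snd (prod_decode t))))
        (snd (prod_decode (snd (prod_decode t))))
      then fst (prod_decode t) else 0)"

definition side_set :: "bool \<Rightarrow> (nat \<Rightarrow> nat) \<Rightarrow> real list set" where
  "side_set left p = (\<Union>t. ball_of_code 1 (side_code left p t))"

lemma mem_side_set: "z \<in> side_set left p \<longleftrightarrow> (\<exists>w k j. side_piece left p w k j \<and> z \<in> ball_of_code 1 w)"
proof
  assume "z \<in> side_set left p"
  then show "\<exists>w k j. side_piece left p w k j \<and> z \<in> ball_of_code 1 w"
    unfolding side_set_def side_code_def by (auto simp: ball_of_code_0 split: if_splits)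
next
  assume "\<exists>w k j. side_piece left p w k j \<and> z \<in> ball_of_code 1 w"
  then obtain w k j where "side_piece left p w k j" "z \<in> ball_of_code 1 w" by blast
  then have "z \<in> ball_of_code 1 (side_code left p (prod_encode (w, prod_encode (k, j))))"
    by (simp add: side_code_def)
  then show "z \<in> side_set left p"
    unfolding side_set_def by blast
qed

lemma ropen_side_set: "ropen 1 (side_set left p)"
  unfolding side_set_def by (intro ropen_Union) (auto intro: ropen_ball_of_code_1)

lemma rel_computable_side_code: "rel_computable P (\<lambda>p a. side_code left p (a 0))"
  unfolding side_code_def side_piece_def ival_code_def ival_lo_def ival_hi_def name_approx_def
  by (intro rel_computable_If rel_decidable_conj rel_decidable_If rel_decidable_const
      rel_decidable_length_list_decode rel_decidable_rat_less rel_decidable_rat_le rel_computable_rat_add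
      rel_computable_rat_diff rel_computable_rat_half_power rel_computable_rat_code rel_computable_list_head
      rel_computable_oracle rel_computable_enum rel_computable_fst_prod_decode rel_computable_snd_prod_decode
      rel_computable_arg rel_computable_const)

context
  fixes p x0 assumes x0: "[x0] \<in> X" and p: "cauchy_name 1 p [x0]"
begin

lemma name_approx_close: "\<bar>name_approx p j - x0\<bar> \<le> (1 / 2) ^ j"
  using p by (simp add: cauchy_name_1_iff)

lemma side_set_subset:
  "side_set left p \<subseteq> (\<lambda>t. [t]) ` {t \<in> connected_component_set S x0. if left then t < x0 else x0 < t}"
proof
  fix z assume "z \<in> side_set left p"
  then obtain w k j where piece: "side_piece left p w k j" and "z \<in> ball_of_code 1 w"
    by (auto simp: mem_side_set)
  then obtain t where z: "z = [t]" "ival_code w" "ival_lo w < t" "t < ival_hi w"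
    by (auto simp: ball_of_code_1 split: if_splits)
  let ?lo = "ival_lo (enum k)" and ?hi = "ival_hi (enum k)"
  have "(\<lambda>t. [t]) ` {?lo<..<?hi} \<subseteq> X"
    using piece X_eq_enum unfolding side_piece_def by (auto simp: ball_of_code_1)
  then have "{?lo<..<?hi} \<subseteq> S"
    by (auto simp: S_def)
  moreover have side: "if left then t < x0 else x0 < t" and "?lo < t" "t < ?hi" "?lo < x0" "x0 < ?hi"
    using piece z name_approx_close[of j] unfolding side_piece_def
    by (auto simp: abs_le_iff split: if_splits)
  moreover have "{min t x0..max t x0} \<subseteq> {?lo<..<?hi}"
    using \<open>?lo < t\<close> \<open>t < ?hi\<close> \<open>?lo < x0\<close> \<open>x0 < ?hi\<close> by auto
  ultimately have "{min t x0..max t x0} \<subseteq> connected_component_set S x0"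
    by (intro connected_component_maximal) auto
  then have "t \<in> connected_component_set S x0"
    by (rule subsetD) simp
  then show "z \<in> (\<lambda>t. [t]) ` {t \<in> connected_component_set S x0. if left then t < x0 else x0 < t}"
    using z side by auto
qed

lemma side_set_approaches:
  assumes "\<epsilon> > 0"
  shows "\<exists>t. [t] \<in> side_set left p \<and> \<bar>t - x0\<bar> < \<epsilon>"
proof -
  obtain k where "[x0] \<in> ball_of_code 1 (enum k)"
    using x0 X_eq_enum by blast
  then have k: "ival_code (enum k)" "ival_lo (enum k) < x0" "x0 < ival_hi (enum k)"
    by (auto simp: ball_of_code_1 split: if_splits)
  let ?lo = "ival_lo (enum k)" and ?hi = "ival_hi (enum k)"
  obtain j where j: "(1 / 2) ^ j < min \<epsilon> (min (x0 - ?lo) (?hi - x0)) / 2"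
    using real_arch_pow_inv[of "min \<epsilon> (min (x0 - ?lo) (?hi - x0)) / 2" "1 / 2"] assms k by auto
  let ?h = "(1 / 2 :: real) ^ j" and ?a = "name_approx p j"
  have a: "\<bar>?a - x0\<bar> \<le> ?h"
    by (rule name_approx_close)
  define \<alpha> where "\<alpha> = (if left then max ?lo (x0 - \<epsilon>) else ?a + ?h)"
  define \<beta> where "\<beta> = (if left then ?a - ?h else min ?hi (x0 + \<epsilon>))"
  have "\<alpha> < \<beta>"
    using j a by (auto simp: \<alpha>_def \<beta>_def abs_le_iff)
  then obtain w where w: "ival_code w" "\<alpha> < ival_lo w" "ival_lo w < ival_hi w" "ival_hi w < \<beta>"
    by (rule ival_code_between)
  have "side_piece left p w k j"
    using k w j a unfolding side_piece_def \<alpha>_def \<beta>_def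
    by (auto simp: abs_le_iff split: if_splits)
  moreover define t where "t = (ival_lo w + ival_hi w) / 2"
  then have "[t] \<in> ball_of_code 1 w"
    using w by (simp add: ball_of_code_1)
  ultimately have "[t] \<in> side_set left p"
    by (auto simp: mem_side_set)
  moreover have "if left then x0 - \<epsilon> < t \<and> t < x0 else x0 < t \<and> t < x0 + \<epsilon>"
    using w a unfolding t_def \<alpha>_def \<beta>_def by (auto simp: abs_le_iff split: if_splits)
  then have "\<bar>t - x0\<bar> < \<epsilon>"
    using assms by (auto split: if_splits)
  ultimately show ?thesis
    by blast
qed

end

definition names_point :: "(nat \<Rightarrow> nat) \<Rightarrow> bool" where
  "names_point p \<longleftrightarrow> (\<exists>x\<in>X. cauchy_name 1 p x)"

lemma names_pointE:
  assumes "names_point p"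
  obtains x0 where "[x0] \<in> X" "cauchy_name 1 p [x0]"
proof -
  obtain x where x: "x \<in> X" "cauchy_name 1 p x"
    using assms unfolding names_point_def by blast
  then have "x \<in> (\<lambda>t. [t]) ` S"
    by (simp add: singleton_image_S)
  then obtain x0 where "x = [x0]"
    by blast
  then show ?thesis
    using x that by blast
qed

definition image_code :: "bool \<Rightarrow> (nat \<Rightarrow> nat) \<Rightarrow> nat \<Rightarrow> nat" where
  "image_code left = (SOME V. rel_computable names_point (\<lambda>p a. V p (a 0)) \<and>
     (\<forall>p. names_point p \<longrightarrow> theta_name 1 (V p) (f ` side_set left p)))"

lemma image_code:
  "rel_computable names_point (\<lambda>p a. image_code left p (a 0))"
  "names_point p \<Longrightarrow> theta_name 1 (image_code left p) (f ` side_set left p)"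
proof -
  have U: "theta_name 1 (side_code left p) (side_set left p) \<and> ropen 1 (side_set left p) \<and> side_set left p \<subseteq> X"
    if "names_point p" for p
  proof (intro conjI)
    show "theta_name 1 (side_code left p) (side_set left p)"
      by (simp add: side_set_def theta_name_iff)
    show "ropen 1 (side_set left p)"
      by (rule ropen_side_set)
    obtain x0 where x0: "[x0] \<in> X" "cauchy_name 1 p [x0]"
      using \<open>names_point p\<close> by (rule names_pointE)
    have "side_set left p \<subseteq> (\<lambda>t. [t]) ` connected_component_set S x0"
      using side_set_subset[OF x0, of left] by blast
    also have "\<dots> \<subseteq> (\<lambda>t. [t]) ` S"
      by (intro image_mono connected_component_subset)
    finally show "side_set left p \<subseteq> X"
      by (simp only: singleton_image_S)
  qed
  have "\<exists>V. rel_computable names_point (\<lambda>p a. V p (a 0)) \<and>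
      (\<forall>p. names_point p \<longrightarrow> theta_name 1 (V p) (f ` side_set left p))"
    by (rule eff_open_rel_computable[OF eff_open rel_computable_side_code U])
  then have *: "rel_computable names_point (\<lambda>p a. image_code left p (a 0)) \<and>
      (\<forall>p. names_point p \<longrightarrow> theta_name 1 (image_code left p) (f ` side_set left p))"
    unfolding image_code_def by (rule someI_ex)
  then show "rel_computable names_point (\<lambda>p a. image_code left p (a 0))"
    by (rule conjunct1)
  show "names_point p \<Longrightarrow> theta_name 1 (image_code left p) (f ` side_set left p)"
    using * by blast
qed

lemma rel_computable_image_code:
  "rel_computable names_point G \<Longrightarrow> rel_computable names_point (\<lambda>p a. image_code left p (G p a))"
  by (rule rel_computable_compose1[OF image_code(1)])

text \<open>The value g x0 lies between any interval enumerated for the image of the left side set and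
  any one enumerated for the image of the right side set, so an endpoint of each near z puts
  g x0 near z.\<close>

definition ends_near :: "nat \<Rightarrow> real \<Rightarrow> real \<Rightarrow> bool" where
  "ends_near w z h \<longleftrightarrow> ival_code w \<and> ival_lo w < ival_hi w \<and>
     (\<bar>ival_lo w - z\<bar> \<le> h \<or> \<bar>ival_hi w - z\<bar> \<le> h)"

lemma ends_near_shift: "ends_near w y h \<Longrightarrow> \<bar>z - y\<bar> \<le> d \<Longrightarrow> ends_near w z (h + d)"
  unfolding ends_near_def by (smt (verit))

definition good_approx :: "(nat \<Rightarrow> nat) \<Rightarrow> nat \<Rightarrow> nat \<Rightarrow> bool" where
  "good_approx p k t \<longleftrightarrow>
     ends_near (image_code True p (fst (prod_decode (snd (prod_decode t))))) (rat_code (fst (prod_decode t))) ((1 / 2) ^ k) \<and>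
     ends_near (image_code False p (snd (prod_decode (snd (prod_decode t))))) (rat_code (fst (prod_decode t))) ((1 / 2) ^ k)"

context
  fixes p x0 assumes x0: "[x0] \<in> X" and p: "cauchy_name 1 p [x0]"
begin

definition increasing :: bool where
  "increasing \<longleftrightarrow> strict_mono_on (connected_component_set S x0) g"

lemma names_point: "names_point p"
  using x0 p unfolding names_point_def by blast

lemma mem_image_side_set:
  assumes "[y] \<in> f ` side_set left p"
  shows "y \<noteq> g x0 \<and> (y < g x0 \<longleftrightarrow> (left \<longleftrightarrow> increasing))"
proof -
  let ?C = "connected_component_set S x0"
  obtain t where t: "t \<in> ?C" "if left then t < x0 else x0 < t" "[y] = f [t]"
    using assms side_set_subset[OF x0 p, of left] by blast
  have "?C \<subseteq> S" "x0 \<in> ?C"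
    using x0 connected_component_subset by (auto simp: S_def)
  then have mono: "strict_mono_on ?C g \<or> strict_antimono_on ?C g"
    using open_map_strict_mono_on_interval[of ?C g] continuous_on_subset[OF continuous_on_g]
      open_image_g is_interval_connected_1 by blast
  have incr: "if left then g t < g x0 else g x0 < g t" if "strict_mono_on ?C g"
    using monotone_onD[OF that] t(1,2) \<open>x0 \<in> ?C\<close> by (cases left) auto
  have decr: "if left then g x0 < g t else g t < g x0" if "strict_antimono_on ?C g"
    using monotone_onD[OF that] t(1,2) \<open>x0 \<in> ?C\<close> by (cases left) auto
  have "y = g t"
    using t(3) \<open>?C \<subseteq> S\<close> \<open>t \<in> ?C\<close> by (auto simp: S_def f_singleton)
  then show ?thesis
    using mono incr decr unfolding increasing_def by (cases left) auto
qed

lemma image_code_beside: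
  assumes "ival_code (image_code left p i)" "ival_lo (image_code left p i) < ival_hi (image_code left p i)"
  shows "if left \<longleftrightarrow> increasing
    then ival_lo (image_code left p i) \<le> g x0 \<and> ival_hi (image_code left p i) \<le> g x0
    else g x0 \<le> ival_lo (image_code left p i) \<and> g x0 \<le> ival_hi (image_code left p i)"
proof -
  let ?lo = "ival_lo (image_code left p i)" and ?hi = "ival_hi (image_code left p i)"
  have "[y] \<in> f ` side_set left p" if "?lo < y" "y < ?hi" for y
    using image_code(2)[OF names_point, of left] assms(1) that
    unfolding theta_name_iff by (auto simp: ball_of_code_1)
  then have side: "y \<noteq> g x0 \<and> (y < g x0 \<longleftrightarrow> (left \<longleftrightarrow> increasing))" if "?lo < y" "y < ?hi" for y
    using that mem_image_side_set by blast
  show ?thesis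
  proof (cases "left \<longleftrightarrow> increasing")
    case True
    then have "?hi \<le> g x0"
      using side by (intro dense_le_bounded[OF assms(2)]) (simp add: less_imp_le)
    then show ?thesis
      using True assms(2) by simp
  next
    case False
    then have "g x0 \<le> ?lo"
      using side by (intro dense_ge_bounded[OF assms(2)]) (simp add: not_less)
    then show ?thesis
      using False assms(2) by simp
  qed
qed

lemma good_approx_close:
  assumes "good_approx p k t"
  shows "\<bar>rat_code (fst (prod_decode t)) - g x0\<bar> \<le> (1 / 2) ^ k"
proof -
  let ?z = "rat_code (fst (prod_decode t))" and ?h = "(1 / 2 :: real) ^ k"
  obtain e1 e2 where "\<bar>e1 - ?z\<bar> \<le> ?h" "\<bar>e2 - ?z\<bar> \<le> ?h"
    and "if increasing then e1 \<le> g x0 \<and> g x0 \<le> e2 else e2 \<le> g x0 \<and> g x0 \<le> e1"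
  proof -
    let ?w1 = "image_code True p (fst (prod_decode (snd (prod_decode t))))"
      and ?w2 = "image_code False p (snd (prod_decode (snd (prod_decode t))))"
    have "ends_near ?w1 ?z ?h" "ends_near ?w2 ?z ?h"
      using assms by (simp_all add: good_approx_def)
    moreover note image_code_beside[of True] image_code_beside[of False]
    ultimately show ?thesis
      unfolding ends_near_def by (cases increasing) (metis that)+
  qed
  then show ?thesis
    by (cases increasing) (auto simp: abs_le_iff)
qed

lemma image_code_near:
  assumes "\<delta> > 0"
  shows "\<exists>i. ival_code (image_code left p i) \<and> ival_lo (image_code left p i) < ival_hi (image_code left p i) \<and>
    (\<bar>ival_lo (image_code left p i) - g x0\<bar> < \<delta> \<or> \<bar>ival_hi (image_code left p i) - g x0\<bar> < \<delta>)"
proof -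
  obtain d where "d > 0" and d: "\<forall>y\<in>X. rdist y [x0] < d \<longrightarrow> rdist (f y) (f [x0]) < \<delta>"
    using cont x0 assms unfolding rcont_def by blast
  obtain t where t: "[t] \<in> side_set left p" "\<bar>t - x0\<bar> < d"
    using side_set_approaches[OF x0 p \<open>d > 0\<close>] by blast
  then have "[t] \<in> X"
    using side_set_subset[OF x0 p, of left] connected_component_subset by (fastforce simp: S_def)
  then have "\<bar>g t - g x0\<bar> < \<delta>" and "[g t] \<in> f ` side_set left p"
    using d t x0 by (auto simp: f_singleton intro!: image_eqI[of _ f "[t]"])
  moreover obtain i where "[g t] \<in> ball_of_code 1 (image_code left p i)"
    using \<open>[g t] \<in> f ` side_set left p\<close> image_code(2)[OF names_point, of left]
    unfolding theta_name_iff by blast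
  then have i: "ival_code (image_code left p i)" "ival_lo (image_code left p i) < g t" "g t < ival_hi (image_code left p i)"
    by (auto simp: ball_of_code_1 split: if_splits)
  ultimately show ?thesis
    using image_code_beside[OF i(1)] i by (intro exI[of _ i]) (auto split: if_splits)
qed

lemma good_approx_exists: "\<exists>t. good_approx p k t"
proof -
  define \<delta> :: real where "\<delta> = (1 / 2) ^ Suc k"
  have "\<delta> > 0"
    by (simp add: \<delta>_def)
  obtain i1 i2 where i1: "ends_near (image_code True p i1) (g x0) \<delta>"
    and i2: "ends_near (image_code False p i2) (g x0) \<delta>"
    using image_code_near[OF \<open>\<delta> > 0\<close>] unfolding ends_near_def by (meson less_imp_le)
  obtain z where "z \<in> \<rat>" "\<bar>z - g x0\<bar> \<le> \<delta>"
    using Rats_dense_in_real[of "g x0 - \<delta>" "g x0 + \<delta>"] \<open>\<delta> > 0\<close> by (auto simp: abs_le_iff)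
  then obtain zc where zc: "\<bar>rat_code zc - g x0\<bar> \<le> \<delta>"
    by (metis rat_code_surj)
  have "\<delta> + \<delta> = (1 / 2) ^ k"
    by (simp add: \<delta>_def)
  then have "good_approx p k (prod_encode (zc, prod_encode (i1, i2)))"
    using ends_near_shift[OF i1 zc] ends_near_shift[OF i2 zc] by (simp add: good_approx_def)
  then show ?thesis
    by blast
qed

end

lemma rcomputable: "rcomputable 1 1 X f"
proof -
  let ?out = "\<lambda>p k. list_encode [fst (prod_decode (LEAST t. good_approx p k t))]"
  have "rel_computable names_point (\<lambda>p a. LEAST t. good_approx p (a 0) t)"
  proof (rule rel_computable_Least[where Q = "\<lambda>p t b. good_approx p (b 0) t"])
    show "rel_decidable names_point (\<lambda>p a. good_approx p (a (Suc 0)) (a 0))"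
      unfolding good_approx_def ends_near_def ival_code_def ival_lo_def ival_hi_def
      by (intro rel_decidable_conj rel_decidable_disj rel_decidable_length_list_decode
          rel_decidable_rat_abs_le rel_decidable_rat_less rel_computable_rat_add rel_computable_rat_diff
          rel_computable_rat_half_power rel_computable_rat_code rel_computable_list_head
          rel_computable_image_code rel_computable_fst_prod_decode rel_computable_snd_prod_decode
          rel_computable_arg)
    show "\<exists>t. good_approx p (a 0) t" if "names_point p" for p a
      using that by (elim names_pointE) (rule good_approx_exists)
  qed
  then have "rel_computable names_point (\<lambda>p a. ?out p (a 0))"
    unfolding list_encode.simps
    by (intro rel_computable_Suc rel_computable_prod_encode rel_computable_fst_prod_decode rel_computable_const)
  then obtain e where e: "\<And>p k. names_point p \<Longrightarrow> oeval p e [k] (?out p k)"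
    unfolding rel_computable_unary_iff[of names_point ?out] by blast
  show ?thesis
    unfolding rcomputable_def computable_on_def
  proof (intro exI[of _ e] allI impI)
    fix p x assume "x \<in> X" "cauchy_name 1 p x"
    moreover obtain x0 where "x = [x0]"
      using \<open>x \<in> X\<close> singleton_image_S by blast
    ultimately have x0: "[x0] \<in> X" and p: "cauchy_name 1 p [x0]"
      by simp_all
    have "cauchy_name 1 (?out p) [g x0]"
      using good_approx_close[OF x0 p LeastI_ex[OF good_approx_exists[OF x0 p]]]
      by (simp add: cauchy_name_1_iff name_approx_def list_head_def)
    then show "\<exists>q. (\<forall>k. oeval p e [k] (q k)) \<and> cauchy_name 1 q (f x)"
      using e[OF names_point[OF x0 p]] f_singleton[OF x0] \<open>x = [x0]\<close>
      by (intro exI[of _ "?out p"]) simp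
  qed
qed

end

theorem theorem6:
  shows "(\<forall>X f. re_open 1 X \<and> rcont 1 1 X f \<and> eff_open 1 1 X f \<longrightarrow> rcomputable 1 1 X f)
       \<and> (\<forall>n m X f. re_open n X \<and> rcont n m X f \<and> eff_open n m X f \<and> \<not> rcomputable n m X f
            \<longrightarrow> (\<exists>i<m. rcont n 1 X (\<lambda>x. [f x ! i]) \<and> eff_open n 1 X (\<lambda>x. [f x ! i])
                        \<and> \<not> rcomputable n 1 X (\<lambda>x. [f x ! i])))"
proof (intro conjI allI impI)
  fix X f assume "re_open 1 X \<and> rcont 1 1 X f \<and> eff_open 1 1 X f"
  then obtain enum where "eff_open_real_fun X f enum"
    unfolding re_open_def eff_open_real_fun_def by blast
  then show "rcomputable 1 1 X f"
    by (rule eff_open_real_fun.rcomputable)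
next
  fix n m X f assume "re_open n X \<and> rcont n m X f \<and> eff_open n m X f \<and> \<not> rcomputable n m X f"
  then show "\<exists>i<m. rcont n 1 X (\<lambda>x. [f x ! i]) \<and> eff_open n 1 X (\<lambda>x. [f x ! i])
      \<and> \<not> rcomputable n 1 X (\<lambda>x. [f x ! i])"
    using rcomputable_of_components rcont_component eff_open_component by blast
qed

end
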